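(* Let $G$ be a graph with demand functions $f$ and $g$ and fractional list-assignment $L$ such that for each $v\in V(G)$, $g(v) \leq f(v)\mu(L(v))$. If for each $S\subseteq V(G)$ with $\mu(\bigcap_{v\in S}L(v)) > 0$ the graph $G[S]$ has an $f$-coloring (with respect to $f$ restricted to $S$), then $G$ has a fractional $(g, L)$-coloring.
   Context: A demand function for a graph $G$ is a function $f: V(G)\to [0,1]\cap\mathbb{Q}$. A fractional coloring of $G$ is a function $\phi$ assigning to each $v\in V(G)$ a measurable subset $\phi(v)\subseteq[0,1]$ such that $\phi(u)\cap\phi(v)=\varnothing$ for every edge $uv$; an $f$-coloring is a fractional coloring with $\mu(\phi(v))\geq f(v)$ for all $v$, $\mu$ being Lebesgue measure. A fractional list-assignment is a function $L$ assigning to each vertex a measurable subset $L(v)\subseteq[0,1]$. A fractional $(g,L)$-coloring is a $g$-coloring $\phi$ with $\phi(v)\subseteq L(v)$ for all $v$. *)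

theory Defs
  imports "HOL-Analysis.Analysis"
begin

definition graph :: "'a set \<Rightarrow> ('a \<Rightarrow> 'a \<Rightarrow> bool) \<Rightarrow> bool" where
  "graph V E \<longleftrightarrow> finite V \<and> (\<forall>u v. E u v \<longrightarrow> u \<in> V \<and> v \<in> V)
     \<and> (\<forall>u v. E u v \<longrightarrow> E v u) \<and> (\<forall>v. \<not> E v v)"

definition demand_function :: "'a set \<Rightarrow> ('a \<Rightarrow> real) \<Rightarrow> bool" where
  "demand_function V f \<longleftrightarrow> (\<forall>v\<in>V. f v \<in> \<rat> \<and> 0 \<le> f v \<and> f v \<le> 1)"

definition fractional_list_assignment :: "'a set \<Rightarrow> ('a \<Rightarrow> real set) \<Rightarrow> bool" where
  "fractional_list_assignment V L \<longleftrightarrow> (\<forall>v\<in>V. L v \<in> sets lebesgue \<and> L v \<subseteq> {0..1})"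

text \<open>Fractional coloring of the graph (V,E) (also used for induced subgraphs G[S]
  by passing S as vertex set: only edges between vertices of S are constrained).\<close>
definition fractional_coloring :: "'a set \<Rightarrow> ('a \<Rightarrow> 'a \<Rightarrow> bool) \<Rightarrow> ('a \<Rightarrow> real set) \<Rightarrow> bool" where
  "fractional_coloring V E \<phi> \<longleftrightarrow>
     (\<forall>v\<in>V. \<phi> v \<in> sets lebesgue \<and> \<phi> v \<subseteq> {0..1})
     \<and> (\<forall>u\<in>V. \<forall>v\<in>V. E u v \<longrightarrow> \<phi> u \<inter> \<phi> v = {})"

definition f_coloring :: "'a set \<Rightarrow> ('a \<Rightarrow> 'a \<Rightarrow> bool) \<Rightarrow> ('a \<Rightarrow> real) \<Rightarrow> ('a \<Rightarrow> real set) \<Rightarrow> bool" where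
  "f_coloring V E f \<phi> \<longleftrightarrow> fractional_coloring V E \<phi> \<and> (\<forall>v\<in>V. measure lebesgue (\<phi> v) \<ge> f v)"

definition gL_coloring :: "'a set \<Rightarrow> ('a \<Rightarrow> 'a \<Rightarrow> bool) \<Rightarrow> ('a \<Rightarrow> real) \<Rightarrow> ('a \<Rightarrow> real set) \<Rightarrow> ('a \<Rightarrow> real set) \<Rightarrow> bool" where
  "gL_coloring V E g L \<phi> \<longleftrightarrow> f_coloring V E g \<phi> \<and> (\<forall>v\<in>V. \<phi> v \<subseteq> L v)"

end

(*
  Cut [0,1] into the Venn cells of the lists: the cell of S \<subseteq> V consists of the points
  lying in L v exactly for v \<in> S, so L v is the disjoint union of the cells of the sets
  containing v. A cell of positive measure lies in the intersection of the lists of S, so G[S]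
  has an f-colouring. The normalised distribution function of the cell pushes its uniform
  distribution to the uniform distribution on [0,1]; pulling the colouring back along it colours
  G[S] inside the cell with demands f v times the measure of the cell. Colourings in disjoint
  cells do not interfere, and summing over the cells containing v gives v the measure
  f v * \<mu>(L v) \<ge> g v.
*)

theory Submission
  imports Defs "HOL-Probability.Probability"
begin

definition uniform_cdf :: "real set \<Rightarrow> real \<Rightarrow> real" where
  "uniform_cdf A x = measure lebesgue (A \<inter> {..x}) / measure lebesgue A"

lemma lipschitz_measure_Int_atMost:
  fixes A :: "real set"
  assumes "A \<in> lmeasurable"
  shows "1-lipschitz_on UNIV (\<lambda>x. measure lebesgue (A \<inter> {..x}))"
proof (rule lipschitz_onI)
  have increment: "measure lebesgue (A \<inter> {..y}) - measure lebesgue (A \<inter> {..x}) \<in> {0..y - x}"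
    if "x \<le> y" for x y :: real
  proof -
    have "measure lebesgue (A \<inter> {..y}) \<le> measure lebesgue ((A \<inter> {..x}) \<union> {x..y})"
      using assms by (intro measure_mono_fmeasurable fmeasurable.Un fmeasurable_Int_fmeasurable) auto
    also have "\<dots> \<le> measure lebesgue (A \<inter> {..x}) + measure lebesgue {x..y}"
      using assms by (intro measure_Un_le) (auto intro: fmeasurable_Int_fmeasurable)
    finally have "measure lebesgue (A \<inter> {..y}) - measure lebesgue (A \<inter> {..x}) \<le> y - x"
      using that by simp
    moreover have "measure lebesgue (A \<inter> {..x}) \<le> measure lebesgue (A \<inter> {..y})"
      using assms that by (intro measure_mono_fmeasurable fmeasurable_Int_fmeasurable) auto
    ultimately show ?thesis by simp
  qed
  fix x y :: real
  show "dist (measure lebesgue (A \<inter> {..x})) (measure lebesgue (A \<inter> {..y})) \<le> 1 * dist x y"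
    using increment[of x y] increment[of y x] by (cases "x \<le> y") (auto simp: dist_real_def)
qed simp

lemma continuous_uniform_cdf: "A \<in> lmeasurable \<Longrightarrow> continuous_on UNIV (uniform_cdf A)"
  unfolding uniform_cdf_def divide_inverse
  by (intro continuous_on_mult_right lipschitz_on_continuous_on[OF lipschitz_measure_Int_atMost])

lemma mono_uniform_cdf: "A \<in> lmeasurable \<Longrightarrow> mono (uniform_cdf A)"
  unfolding mono_def uniform_cdf_def
  by (auto intro!: divide_right_mono measure_mono_fmeasurable fmeasurable_Int_fmeasurable)

lemma borel_measurable_uniform_cdf: "A \<in> lmeasurable \<Longrightarrow> uniform_cdf A \<in> borel_measurable lebesgue"
  by (intro measurable_completion) (simp add: borel_measurable_mono mono_uniform_cdf)

lemma uniform_cdf_nonneg: "0 \<le> uniform_cdf A x"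
  by (simp add: uniform_cdf_def)

lemma uniform_cdf_le_1:
  assumes "A \<in> lmeasurable"
  shows "uniform_cdf A x \<le> 1"
proof -
  have "measure lebesgue (A \<inter> {..x}) \<le> measure lebesgue A"
    using assms by (intro measure_mono_fmeasurable) auto
  then show ?thesis by (simp add: uniform_cdf_def divide_le_eq_1 less_le)
qed

lemma uniform_cdf_lower_end:
  assumes "A \<subseteq> {a..}"
  shows "uniform_cdf A a = 0"
proof -
  have "A \<inter> {..a} \<subseteq> {a}" using assms by auto
  then have "A \<inter> {..a} = {} \<or> A \<inter> {..a} = {a}" by (rule subset_singletonD)
  then show ?thesis by (auto simp: uniform_cdf_def)
qed

lemma uniform_cdf_upper_end:
  assumes "A \<subseteq> {..b}" "measure lebesgue A > 0"
  shows "uniform_cdf A b = 1"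
proof -
  have "A \<inter> {..b} = A" using assms(1) by auto
  then show ?thesis using assms(2) by (simp add: uniform_cdf_def)
qed

lemma sublevel_set_continuous_mono:
  fixes F :: "real \<Rightarrow> real"
  assumes cont: "continuous_on UNIV F" and "mono F" and "F a \<le> t" "t < F b"
  obtains s where "{y. F y \<le> t} = {..s}" "F s = t"
proof -
  define K where "K = {y. F y \<le> t}"
  have below_b: "y \<le> b" if "y \<in> K" for y
  proof (rule ccontr)
    assume "\<not> y \<le> b"
    then have "F b \<le> F y" using \<open>mono F\<close> by (simp add: mono_def)
    then show False using that \<open>t < F b\<close> by (simp add: K_def)
  qed
  have "closed K" unfolding K_def using cont by (intro closed_Collect_le) auto
  moreover have "a \<in> K" using \<open>F a \<le> t\<close> by (simp add: K_def)
  moreover have "bdd_above K" using below_b by (rule bdd_aboveI)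
  ultimately have "Sup K \<in> K" by (intro closed_contains_Sup) auto
  have K_eq: "K = {..Sup K}"
  proof
    show "K \<subseteq> {..Sup K}" using \<open>bdd_above K\<close> by (auto intro: cSup_upper)
    show "{..Sup K} \<subseteq> K"
      using \<open>Sup K \<in> K\<close> \<open>mono F\<close> unfolding K_def mono_def by (auto intro: order_trans)
  qed
  have "F (Sup K) \<le> t" "Sup K \<le> b" using \<open>Sup K \<in> K\<close> below_b by (auto simp: K_def)
  moreover have "\<forall>x. isCont F x" using cont by (simp add: continuous_on_eq_continuous_at)
  ultimately obtain s where s: "Sup K \<le> s" "F s = t"
    using IVT[of F "Sup K" t b] \<open>t < F b\<close> by auto
  moreover have "s \<le> Sup K" using s(2) K_eq by (auto simp: K_def)
  ultimately have "s = Sup K" by simp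
  then show ?thesis using that K_eq s(2) by (simp add: K_def)
qed

lemma lmeasurable_if_subset_Icc:
  fixes A :: "real set"
  shows "A \<in> sets lebesgue \<Longrightarrow> A \<subseteq> {a..b} \<Longrightarrow> A \<in> lmeasurable"
  by (meson bounded_closed_interval bounded_subset bounded_set_imp_lmeasurable)

lemma measure_uniform_cdf_le:
  assumes A: "A \<in> sets lebesgue" "A \<subseteq> {a..b}" "measure lebesgue A > 0"
  shows "measure lebesgue (A \<inter> {y. uniform_cdf A y \<le> t})
           = measure lebesgue A * measure lborel ({0..1} \<inter> {..t})"
proof -
  have "A \<in> lmeasurable" using A(1,2) by (rule lmeasurable_if_subset_Icc)
  consider "t < 0" | "0 \<le> t" "t < 1" | "1 \<le> t" by linarith
  then show ?thesis
  proof cases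
    case 1
    then have "{y. uniform_cdf A y \<le> t} = {}"
      using uniform_cdf_nonneg[of A] by (auto simp: not_le intro: less_le_trans)
    moreover have "{0..1} \<inter> {..t} = ({}::real set)" using 1 by auto
    ultimately show ?thesis by simp
  next
    case 2
    have "A \<subseteq> {a..}" "A \<subseteq> {..b}" using A(2) by auto
    then have "uniform_cdf A a \<le> t" "t < uniform_cdf A b"
      using 2 A(3) uniform_cdf_lower_end uniform_cdf_upper_end by auto
    then obtain s where s: "{y. uniform_cdf A y \<le> t} = {..s}" "uniform_cdf A s = t"
      using \<open>A \<in> lmeasurable\<close>
      by (blast intro: sublevel_set_continuous_mono continuous_uniform_cdf mono_uniform_cdf)
    have "measure lebesgue (A \<inter> {..s}) = measure lebesgue A * t"
      using s(2) A(3) by (simp add: uniform_cdf_def field_simps)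
    moreover have "{0..1} \<inter> {..t} = {0..t}" using 2 by auto
    ultimately show ?thesis using s(1) 2 by simp
  next
    case 3
    then have "{y. uniform_cdf A y \<le> t} = UNIV"
      using uniform_cdf_le_1[OF \<open>A \<in> lmeasurable\<close>] by (auto intro: order_trans)
    moreover have "{0..1} \<inter> {..t} = ({0..1}::real set)" using 3 by auto
    ultimately show ?thesis by simp
  qed
qed

lemma measure_distr_uniform_measure:
  fixes h :: "'a::euclidean_space \<Rightarrow> 'b::topological_space"
  assumes "A \<in> lmeasurable" "measure lebesgue A > 0"
    and "h \<in> borel_measurable lebesgue" "B \<in> sets borel"
  shows "measure (distr (uniform_measure lebesgue A) borel h) B
           = measure lebesgue (A \<inter> h -` B) / measure lebesgue A"
proof -
  have "emeasure lebesgue A \<noteq> 0" "emeasure lebesgue A \<noteq> \<infinity>"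
    using assms(1,2) by (auto simp: emeasure_eq_measure2)
  moreover have "h \<in> borel_measurable (uniform_measure lebesgue A)"
    using assms(3) by (simp add: uniform_measure_def)
  moreover have "h -` B \<in> sets lebesgue" using measurable_sets[OF assms(3,4)] by simp
  ultimately show ?thesis using assms(4) by (simp add: measure_distr uniform_measure_def[symmetric])
qed

lemma distr_uniform_cdf:
  assumes A: "A \<in> sets lebesgue" "A \<subseteq> {a..b}" "measure lebesgue A > 0"
  shows "distr (uniform_measure lebesgue A) borel (uniform_cdf A) = uniform_measure lborel {0..1}"
proof (rule cdf_unique)
  have "A \<in> lmeasurable" using A(1,2) by (rule lmeasurable_if_subset_Icc)
  have cdf_borel: "uniform_cdf A \<in> borel_measurable lebesgue"
    using \<open>A \<in> lmeasurable\<close> by (rule borel_measurable_uniform_cdf)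
  have "emeasure lebesgue A \<noteq> 0" "emeasure lebesgue A \<noteq> \<infinity>"
    using \<open>A \<in> lmeasurable\<close> A(3) by (auto simp: emeasure_eq_measure2)
  then show "real_distribution (distr (uniform_measure lebesgue A) borel (uniform_cdf A))"
    using cdf_borel
    by (intro prob_space.real_distribution_distr prob_space_uniform_measure)
      (auto simp: uniform_measure_def)
  show "real_distribution (uniform_measure lborel {0..1::real})"
    by (intro real_distribution.intro prob_space_uniform_measure real_distribution_axioms.intro) auto
  show "cdf (distr (uniform_measure lebesgue A) borel (uniform_cdf A))
          = cdf (uniform_measure lborel {0..1})"
  proof
    fix t
    have "A \<inter> uniform_cdf A -` {..t} = A \<inter> {y. uniform_cdf A y \<le> t}" by auto
    then show "cdf (distr (uniform_measure lebesgue A) borel (uniform_cdf A)) t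
                 = cdf (uniform_measure lborel {0..1}) t"
      using measure_distr_uniform_measure[OF \<open>A \<in> lmeasurable\<close> A(3) cdf_borel]
        measure_uniform_cdf_le[OF A] A(3) by (simp add: cdf_def)
  qed
qed

lemma measure_Int_vimage_uniform_cdf:
  assumes A: "A \<in> sets lebesgue" "A \<subseteq> {a..b}" "measure lebesgue A > 0"
    and B: "B \<in> sets borel"
  shows "measure lebesgue (A \<inter> uniform_cdf A -` B)
           = measure lebesgue A * measure lborel ({0..1} \<inter> B)"
proof -
  have "A \<in> lmeasurable" using A(1,2) by (rule lmeasurable_if_subset_Icc)
  have "measure lebesgue (A \<inter> uniform_cdf A -` B) / measure lebesgue A
          = measure (uniform_measure lborel {0..1}) B"
    using measure_distr_uniform_measure[OF \<open>A \<in> lmeasurable\<close> A(3)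
        borel_measurable_uniform_cdf[OF \<open>A \<in> lmeasurable\<close>] B]
      distr_uniform_cdf[OF A] by simp
  then show ?thesis using A(3) B by (simp add: field_simps)
qed

lemma measure_main_part:
  "S \<in> sets (completion M) \<Longrightarrow> measure M (main_part M S) = measure (completion M) S"
  by (simp add: measure_def)

lemma main_part_subset: "S \<in> sets (completion M) \<Longrightarrow> main_part M S \<subseteq> S"
  using main_part_null_part_Un by blast

lemma gL_coloring_rescaled_into:
  assumes A: "A \<in> sets lebesgue" "A \<subseteq> {0..1}" "measure lebesgue A > 0"
    and \<psi>: "f_coloring S E f \<psi>"
  shows "\<exists>\<phi>. gL_coloring S E (\<lambda>v. measure lebesgue A * f v) (\<lambda>_. A) \<phi>"
proof -
  \<comment> \<open>Preimages of Lebesgue sets under \<open>uniform_cdf A\<close> need not be measurable, so each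
    \<open>\<psi> v\<close> is first shrunk to a Borel set of the same measure.\<close>
  define B where "B v = main_part lborel (\<psi> v)" for v
  define \<phi> where "\<phi> v = A \<inter> uniform_cdf A -` B v" for v
  have \<psi>v: "\<psi> v \<in> sets lebesgue" "\<psi> v \<subseteq> {0..1}" "f v \<le> measure lebesgue (\<psi> v)" if "v \<in> S" for v
    using \<psi> that by (auto simp: f_coloring_def fractional_coloring_def)
  have B: "B v \<in> sets borel" "B v \<subseteq> \<psi> v" "measure lborel (B v) = measure lebesgue (\<psi> v)"
    if "v \<in> S" for v
    using \<psi>v(1)[OF that] main_part_sets[of "\<psi> v" lborel] main_part_subset measure_main_part
    unfolding B_def by auto
  have "A \<in> lmeasurable" using A(1,2) by (rule lmeasurable_if_subset_Icc)
  have "\<phi> v \<in> sets lebesgue" if "v \<in> S" for v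
    using A(1) measurable_sets[OF borel_measurable_uniform_cdf[OF \<open>A \<in> lmeasurable\<close>] B(1)[OF that]]
    unfolding \<phi>_def by auto
  moreover have "\<phi> u \<inter> \<phi> v = {}" if "u \<in> S" "v \<in> S" "E u v" for u v
  proof -
    have "\<psi> u \<inter> \<psi> v = {}" using \<psi> that by (auto simp: f_coloring_def fractional_coloring_def)
    then show ?thesis using B(2)[OF that(1)] B(2)[OF that(2)] unfolding \<phi>_def by blast
  qed
  moreover have "measure lebesgue A * f v \<le> measure lebesgue (\<phi> v)" if "v \<in> S" for v
  proof -
    have "{0..1} \<inter> B v = B v" using B(2)[OF that] \<psi>v(2)[OF that] by auto
    then have "measure lebesgue (\<phi> v) = measure lebesgue A * measure lebesgue (\<psi> v)"
      using measure_Int_vimage_uniform_cdf[OF A B(1)[OF that]] B(3)[OF that] by (simp add: \<phi>_def)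
    then show ?thesis using \<psi>v(3)[OF that] A(3) by simp
  qed
  ultimately have "gL_coloring S E (\<lambda>v. measure lebesgue A * f v) (\<lambda>_. A) \<phi>"
    using A(2) by (auto simp: gL_coloring_def f_coloring_def fractional_coloring_def \<phi>_def)
  then show ?thesis by blast
qed

definition venn_cell :: "'a set \<Rightarrow> ('a \<Rightarrow> real set) \<Rightarrow> 'a set \<Rightarrow> real set" where
  "venn_cell V L S = {x \<in> {0..1}. \<forall>v\<in>V. x \<in> L v \<longleftrightarrow> v \<in> S}"

lemma sets_venn_cell:
  assumes "finite V" "\<And>v. v \<in> V \<Longrightarrow> L v \<in> sets lebesgue"
  shows "venn_cell V L S \<in> sets lebesgue"
proof -
  have "venn_cell V L S = {0..1} \<inter> (\<Inter>v\<in>V. if v \<in> S then L v else UNIV - L v)"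
    by (auto simp: venn_cell_def)
  also have "\<dots> \<in> sets lebesgue"
    using assms by (intro sets.Int sets.countable_INT'') (auto simp: countable_finite)
  finally show ?thesis .
qed

lemma venn_cell_subset: "S \<subseteq> V \<Longrightarrow> venn_cell V L S \<subseteq> {0..1} \<inter> (\<Inter>v\<in>S. L v)"
  by (auto simp: venn_cell_def)

lemma disjoint_family_venn_cell: "disjoint_family_on (venn_cell V L) (Pow V)"
  unfolding disjoint_family_on_def venn_cell_def by blast

lemma UN_venn_cell:
  assumes "v \<in> V" "L v \<subseteq> {0..1}"
  shows "(\<Union>S\<in>{S. S \<subseteq> V \<and> v \<in> S}. venn_cell V L S) = L v"
proof
  show "(\<Union>S\<in>{S. S \<subseteq> V \<and> v \<in> S}. venn_cell V L S) \<subseteq> L v"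
    using assms(1) by (auto simp: venn_cell_def)
  show "L v \<subseteq> (\<Union>S\<in>{S. S \<subseteq> V \<and> v \<in> S}. venn_cell V L S)"
  proof
    fix x assume "x \<in> L v"
    then have "x \<in> venn_cell V L {w\<in>V. x \<in> L w}" using assms(2) by (auto simp: venn_cell_def)
    moreover have "{w\<in>V. x \<in> L w} \<in> {S. S \<subseteq> V \<and> v \<in> S}" using assms(1) \<open>x \<in> L v\<close> by blast
    ultimately show "x \<in> (\<Union>S\<in>{S. S \<subseteq> V \<and> v \<in> S}. venn_cell V L S)" by (rule UN_I[rotated])
  qed
qed

lemma venn_cell_gL_coloring:
  assumes "finite V" "S \<subseteq> V"
    and L: "\<And>v. v \<in> V \<Longrightarrow> L v \<in> sets lebesgue"
    and colorable: "measure lebesgue ({0..1} \<inter> (\<Inter>v\<in>S. L v)) > 0 \<Longrightarrow> \<exists>\<psi>. f_coloring S E f \<psi>"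
  shows "\<exists>\<phi>. gL_coloring S E (\<lambda>v. measure lebesgue (venn_cell V L S) * f v) (\<lambda>_. venn_cell V L S) \<phi>"
proof (cases "measure lebesgue (venn_cell V L S) > 0")
  case True
  have "finite S" using assms(2,1) by (rule finite_subset)
  then have "{0..1} \<inter> (\<Inter>v\<in>S. L v) \<in> lmeasurable"
    using assms(2) L
    by (intro lmeasurable_if_subset_Icc sets.Int sets.countable_INT'') (auto simp: countable_finite)
  then have "measure lebesgue (venn_cell V L S) \<le> measure lebesgue ({0..1} \<inter> (\<Inter>v\<in>S. L v))"
    using venn_cell_subset[OF assms(2)] sets_venn_cell[OF assms(1) L]
    by (intro measure_mono_fmeasurable) auto
  then obtain \<psi> where "f_coloring S E f \<psi>" using True colorable by force
  then show ?thesis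
    using True sets_venn_cell[OF assms(1) L] venn_cell_subset[OF assms(2)]
    by (intro gL_coloring_rescaled_into) auto
next
  case False
  then have "measure lebesgue (venn_cell V L S) = 0"
    using measure_nonneg[of lebesgue "venn_cell V L S"] by linarith
  then have "gL_coloring S E (\<lambda>v. measure lebesgue (venn_cell V L S) * f v) (\<lambda>_. venn_cell V L S) (\<lambda>_. {})"
    by (simp add: gL_coloring_def f_coloring_def fractional_coloring_def)
  then show ?thesis by blast
qed

lemma gL_coloring_mono:
  assumes "gL_coloring V E g' L' \<phi>" "\<And>v. v \<in> V \<Longrightarrow> g v \<le> g' v" "\<And>v. v \<in> V \<Longrightarrow> L' v \<subseteq> L v"
  shows "gL_coloring V E g L \<phi>"
  using assms by (fastforce simp: gL_coloring_def f_coloring_def)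

lemma gL_coloring_glue:
  fixes R :: "'a set \<Rightarrow> real set" and \<phi> :: "'a set \<Rightarrow> 'a \<Rightarrow> real set"
  assumes "finite V"
    and R: "disjoint_family_on R (Pow V)" "\<And>S. S \<subseteq> V \<Longrightarrow> R S \<in> lmeasurable"
    and \<phi>: "\<And>S. S \<subseteq> V \<Longrightarrow> gL_coloring S E (\<lambda>v. measure lebesgue (R S) * f v) (\<lambda>_. R S) (\<phi> S)"
  shows "gL_coloring V E (\<lambda>v. f v * measure lebesgue (\<Union>S\<in>{S. S \<subseteq> V \<and> v \<in> S}. R S))
           (\<lambda>v. \<Union>S\<in>{S. S \<subseteq> V \<and> v \<in> S}. R S) (\<lambda>v. \<Union>S\<in>{S. S \<subseteq> V \<and> v \<in> S}. \<phi> S v)"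
proof -
  define I where "I v = {S. S \<subseteq> V \<and> v \<in> S}" for v
  have "finite (I v)" for v using \<open>finite V\<close> unfolding I_def by simp
  have \<phi>S: "\<phi> S v \<in> lmeasurable" "\<phi> S v \<subseteq> {0..1}" "\<phi> S v \<subseteq> R S"
    "measure lebesgue (R S) * f v \<le> measure lebesgue (\<phi> S v)" if "S \<in> I v" for S v
    using \<phi>[of S] that unfolding I_def
    by (auto simp: gL_coloring_def f_coloring_def fractional_coloring_def
        intro: lmeasurable_if_subset_Icc)
  have disj: "S = S'" if "S \<in> I u" "S' \<in> I v" "\<phi> S u \<inter> \<phi> S' v \<noteq> {}" for S S' u v
    using R(1) \<phi>S(3)[OF that(1)] \<phi>S(3)[OF that(2)] that
    unfolding disjoint_family_on_def I_def by blast
  have sets_UN: "(\<Union>S\<in>I v. \<phi> S v) \<in> sets lebesgue" for v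
    using \<open>finite (I v)\<close> \<phi>S(1) by (intro sets.finite_UN) auto
  have disjoint_UN: "(\<Union>S\<in>I u. \<phi> S u) \<inter> (\<Union>S\<in>I v. \<phi> S v) = {}"
    if "u \<in> V" "v \<in> V" "E u v" for u v
  proof -
    have "\<phi> S u \<inter> \<phi> S v = {}" if "S \<in> I u" "S \<in> I v" for S
      using \<phi>[of S] that \<open>E u v\<close> unfolding I_def
      by (auto simp: gL_coloring_def f_coloring_def fractional_coloring_def)
    then show ?thesis using disj by blast
  qed
  have measure_UN:
    "f v * measure lebesgue (\<Union>S\<in>I v. R S) \<le> measure lebesgue (\<Union>S\<in>I v. \<phi> S v)" for v
  proof -
    have "f v * measure lebesgue (\<Union>S\<in>I v. R S) = (\<Sum>S\<in>I v. measure lebesgue (R S) * f v)"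
      using \<open>finite (I v)\<close> R unfolding I_def
      by (subst measure_UNION')
        (auto simp: sum_distrib_left mult.commute disjoint_family_on_def disjnt_def pairwise_def)
    also have "\<dots> \<le> (\<Sum>S\<in>I v. measure lebesgue (\<phi> S v))"
      using \<phi>S(4) by (rule sum_mono)
    also have "\<dots> = measure lebesgue (\<Union>S\<in>I v. \<phi> S v)"
    proof (rule measure_UNION'[symmetric])
      show "pairwise (\<lambda>S S'. disjnt (\<phi> S v) (\<phi> S' v)) (I v)"
        using disj unfolding pairwise_def disjnt_def by blast
    qed (use \<open>finite (I v)\<close> \<phi>S(1) in auto)
    finally show ?thesis .
  qed
  have UN_subset: "(\<Union>S\<in>I v. \<phi> S v) \<subseteq> {0..1}" for v
    using \<phi>S(2) by (rule UN_least)
  have UN_subset_UN: "(\<Union>S\<in>I v. \<phi> S v) \<subseteq> (\<Union>S\<in>I v. R S)" for v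
    using \<phi>S(3) by (rule UN_mono[OF order_refl])
  have "gL_coloring V E (\<lambda>v. f v * measure lebesgue (\<Union>S\<in>I v. R S))
      (\<lambda>v. \<Union>S\<in>I v. R S) (\<lambda>v. \<Union>S\<in>I v. \<phi> S v)"
    unfolding gL_coloring_def f_coloring_def fractional_coloring_def
    by (simp add: sets_UN disjoint_UN measure_UN UN_subset UN_subset_UN)
  then show ?thesis by (simp add: I_def)
qed

theorem lemma2p7:
  fixes V :: "'a set" and E :: "'a \<Rightarrow> 'a \<Rightarrow> bool"
    and f g :: "'a \<Rightarrow> real" and L :: "'a \<Rightarrow> real set"
  assumes "graph V E"
    and "demand_function V f" and "demand_function V g"
    and "fractional_list_assignment V L"
    and "\<forall>v\<in>V. g v \<le> f v * measure lebesgue (L v)"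
    and "\<forall>S. S \<subseteq> V \<longrightarrow> measure lebesgue ({0..1} \<inter> (\<Inter>v\<in>S. L v)) > 0
           \<longrightarrow> (\<exists>\<phi>. f_coloring S E f \<phi>)"
  shows "\<exists>\<phi>. gL_coloring V E g L \<phi>"
proof -
  have "finite V" using assms(1) by (simp add: graph_def)
  have L: "L v \<in> sets lebesgue" "L v \<subseteq> {0..1}" if "v \<in> V" for v
    using assms(4) that by (auto simp: fractional_list_assignment_def)
  let ?cell = "venn_cell V L" and ?I = "\<lambda>v. {S. S \<subseteq> V \<and> v \<in> S}"
  have "\<forall>S\<in>Pow V. \<exists>\<phi>. gL_coloring S E (\<lambda>v. measure lebesgue (?cell S) * f v) (\<lambda>_. ?cell S) \<phi>"
    using assms(6) by (auto intro!: venn_cell_gL_coloring[OF \<open>finite V\<close> _ L(1)])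
  then obtain \<phi> where
    \<phi>: "\<forall>S\<in>Pow V. gL_coloring S E (\<lambda>v. measure lebesgue (?cell S) * f v) (\<lambda>_. ?cell S) (\<phi> S)"
    by (rule bchoice[THEN exE])
  have "gL_coloring V E (\<lambda>v. f v * measure lebesgue (\<Union>S\<in>?I v. ?cell S)) (\<lambda>v. \<Union>S\<in>?I v. ?cell S)
      (\<lambda>v. \<Union>S\<in>?I v. \<phi> S v)"
  proof (rule gL_coloring_glue[OF \<open>finite V\<close> disjoint_family_venn_cell])
    show "?cell S \<in> lmeasurable" for S
      using sets_venn_cell[OF \<open>finite V\<close> L(1)]
      by (rule lmeasurable_if_subset_Icc[of _ 0 1]) (auto simp: venn_cell_def)
  qed (use \<phi> in simp)
  then have "gL_coloring V E g L (\<lambda>v. \<Union>S\<in>?I v. \<phi> S v)"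
    by (rule gL_coloring_mono) (simp_all add: UN_venn_cell L(2) assms(5))
  then show ?thesis by blast
qed

end
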